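(* Let $A$ be an integral domain and $B$ an overring of $A$ that is flat over $A$ and well-centered on $A$. If there exists a finite set $\mathcal F$ of height-one prime ideals of $A$ such that $A=B\cap\bigcap_{P\in\mathcal F}A_P$, then $B$ is a localization of $A$.
   Context: For an integral domain $A$ with field of fractions $K$, an overring is a subring of $K$ containing $A$. $B$ is well-centered on $A$ if for each $b\in B$ there is a unit $u$ of $B$ with $ub\in A$. $B$ is a localization of $A$ if $B=S^{-1}A$ for a multiplicatively closed set $S$ of nonzero elements of $A$. *)

theory Defs
  imports Main
begin

text \<open>All rings are subrings of a fixed field K (the type 'k).\<close>

definition subring :: "'k::field set \<Rightarrow> bool" where
  "subring R \<longleftrightarrow> 0 \<in> R \<and> 1 \<in> R \<and>
     (\<forall>x\<in>R. \<forall>y\<in>R. x + y \<in> R \<and> - x \<in> R \<and> x * y \<in> R)"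

definition is_fraction_field_of :: "'k::field set \<Rightarrow> bool" where
  "is_fraction_field_of A \<longleftrightarrow> (\<forall>x::'k. \<exists>a\<in>A. \<exists>b\<in>A. b \<noteq> 0 \<and> x = a / b)"

definition overring :: "'k::field set \<Rightarrow> 'k set \<Rightarrow> bool" where
  "overring A B \<longleftrightarrow> subring B \<and> A \<subseteq> B"

definition unit_of :: "'k::field set \<Rightarrow> 'k \<Rightarrow> bool" where
  "unit_of B u \<longleftrightarrow> u \<in> B \<and> u \<noteq> 0 \<and> inverse u \<in> B"

definition well_centered :: "'k::field set \<Rightarrow> 'k set \<Rightarrow> bool" where
  "well_centered A B \<longleftrightarrow> (\<forall>b\<in>B. \<exists>u. unit_of B u \<and> u * b \<in> A)"

text \<open>Flatness of B as an A-module, via the equational criterion of flatness: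
  every A-linear relation among elements of B is trivial.\<close>
definition flat_over :: "'k::field set \<Rightarrow> 'k set \<Rightarrow> bool" where
  "flat_over A B \<longleftrightarrow>
    (\<forall>(n::nat) (a::nat \<Rightarrow> 'k) (b::nat \<Rightarrow> 'k).
       (\<forall>i<n. a i \<in> A \<and> b i \<in> B) \<and> (\<Sum>i<n. a i * b i) = 0 \<longrightarrow>
       (\<exists>(m::nat) (c::nat \<Rightarrow> nat \<Rightarrow> 'k) (d::nat \<Rightarrow> 'k).
          (\<forall>i<n. \<forall>j<m. c i j \<in> A) \<and> (\<forall>j<m. d j \<in> B) \<and>
          (\<forall>i<n. b i = (\<Sum>j<m. c i j * d j)) \<and>
          (\<forall>j<m. (\<Sum>i<n. a i * c i j) = 0)))"

definition ideal_of :: "'k::field set \<Rightarrow> 'k set \<Rightarrow> bool" where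
  "ideal_of A P \<longleftrightarrow> P \<subseteq> A \<and> 0 \<in> P \<and>
     (\<forall>x\<in>P. \<forall>y\<in>P. x + y \<in> P) \<and> (\<forall>a\<in>A. \<forall>x\<in>P. a * x \<in> P)"

definition prime_ideal_of :: "'k::field set \<Rightarrow> 'k set \<Rightarrow> bool" where
  "prime_ideal_of A P \<longleftrightarrow> ideal_of A P \<and> P \<noteq> A \<and>
     (\<forall>x\<in>A. \<forall>y\<in>A. x * y \<in> P \<longrightarrow> x \<in> P \<or> y \<in> P)"

definition height_one_prime :: "'k::field set \<Rightarrow> 'k set \<Rightarrow> bool" where
  "height_one_prime A P \<longleftrightarrow> prime_ideal_of A P \<and> P \<noteq> {0} \<and>
     (\<forall>Q. prime_ideal_of A Q \<and> Q \<subseteq> P \<longrightarrow> Q = {0} \<or> Q = P)"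

definition loc_at :: "'k::field set \<Rightarrow> 'k set \<Rightarrow> 'k set" where
  "loc_at A S = {a / s | a s. a \<in> A \<and> s \<in> S}"

definition mult_closed_nonzero :: "'k::field set \<Rightarrow> 'k set \<Rightarrow> bool" where
  "mult_closed_nonzero A S \<longleftrightarrow> S \<subseteq> A \<and> 0 \<notin> S \<and> 1 \<in> S \<and>
     (\<forall>x\<in>S. \<forall>y\<in>S. x * y \<in> S)"

definition loc_prime :: "'k::field set \<Rightarrow> 'k set \<Rightarrow> 'k set" where
  "loc_prime A P = loc_at A (A - P)"

definition is_localization :: "'k::field set \<Rightarrow> 'k set \<Rightarrow> bool" where
  "is_localization A B \<longleftrightarrow> (\<exists>S. mult_closed_nonzero A S \<and> B = loc_at A S)"

end

theory Submission
  imports Defs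
begin

text \<open>Let \<open>S\<close> be the set of elements of \<open>A\<close> that are units of \<open>B\<close>, so that
  \<open>S\<^sup>-\<^sup>1A \<subseteq> B\<close>, and let \<open>G\<close> consist of those \<open>P \<in> \<F>\<close> with \<open>B \<not>\<subseteq> A\<^sub>P\<close>; then
  \<open>A = B \<inter> \<Inter>\<^sub>P\<^sub>\<in>\<^sub>G A\<^sub>P\<close>. The heart of the proof is that \<open>S\<close> meets every \<open>P \<in> G\<close>.
  By flatness no prime of \<open>B\<close> lies over \<open>P\<close>, so for \<open>0 \<noteq> y \<in> P\<close> the ideal
  \<open>{t \<in> A. t / y \<in> B}\<close> is not contained in \<open>P\<close>; as distinct height-one primes are
  incomparable, prime avoidance yields such a \<open>t\<close> outside all members of \<open>G\<close>.
  Well-centredness gives a unit \<open>u\<close> of \<open>B\<close> with \<open>u t / y \<in> A\<close>; then \<open>u\<close> lies in every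
  \<open>A\<^sub>Q\<close>, \<open>Q \<in> G\<close>, hence in \<open>A\<close>, and in \<open>P\<close>.
  Finally, as \<open>P\<close> has height one, inverting any element of \<open>P\<close> turns \<open>A\<^sub>P\<close> into the whole
  field of fractions, so every \<open>b \<in> B\<close> has a multiple \<open>s b\<close>, \<open>s \<in> S\<close>, in all \<open>A\<^sub>P\<close>
  with \<open>P \<in> G\<close>, i.e. in \<open>A\<close>. Hence \<open>B = S\<^sup>-\<^sup>1A\<close>.\<close>

lemma subring_0: "subring R \<Longrightarrow> 0 \<in> R"
  and subring_1: "subring R \<Longrightarrow> 1 \<in> R"
  and subring_add: "subring R \<Longrightarrow> x \<in> R \<Longrightarrow> y \<in> R \<Longrightarrow> x + y \<in> R"
  and subring_uminus: "subring R \<Longrightarrow> x \<in> R \<Longrightarrow> - x \<in> R"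
  and subring_mult: "subring R \<Longrightarrow> x \<in> R \<Longrightarrow> y \<in> R \<Longrightarrow> x * y \<in> R"
  by (simp_all add: subring_def)

lemma subring_power: "subring R \<Longrightarrow> x \<in> R \<Longrightarrow> x ^ n \<in> R"
  by (induction n) (auto intro: subring_mult subring_1)

lemma ideal_of_subset: "ideal_of R I \<Longrightarrow> I \<subseteq> R"
  and ideal_of_0: "ideal_of R I \<Longrightarrow> 0 \<in> I"
  and ideal_of_add: "ideal_of R I \<Longrightarrow> x \<in> I \<Longrightarrow> y \<in> I \<Longrightarrow> x + y \<in> I"
  and ideal_of_mult_left: "ideal_of R I \<Longrightarrow> a \<in> R \<Longrightarrow> x \<in> I \<Longrightarrow> a * x \<in> I"
  by (simp_all add: ideal_of_def)

lemma ideal_of_mult_right: "ideal_of R I \<Longrightarrow> a \<in> R \<Longrightarrow> x \<in> I \<Longrightarrow> x * a \<in> I"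
  using ideal_of_mult_left[of R I a x] by (simp add: mult.commute)

lemma ideal_of_diff:
  assumes "subring R" "ideal_of R I" "x \<in> I" "y \<in> I"
  shows "x - y \<in> I"
proof -
  have "(- 1) * y \<in> I"
    using assms by (intro ideal_of_mult_left subring_uminus subring_1)
  then show ?thesis
    using ideal_of_add[OF assms(2,3), of "- y"] by simp
qed

lemma ideal_of_sum:
  "ideal_of R I \<Longrightarrow> (\<And>j. j < m \<Longrightarrow> f j \<in> I) \<Longrightarrow> (\<Sum>j<(m::nat). f j) \<in> I"
  by (induction m) (simp_all add: ideal_of_0 ideal_of_add)

lemma ideal_of_principal:
  assumes "subring R" "y \<in> R"
  shows "ideal_of R {y * d | d. d \<in> R}"
  unfolding ideal_of_def
proof (intro conjI ballI)
  show "{y * d | d. d \<in> R} \<subseteq> R"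
    using assms by (auto intro: subring_mult)
  show "0 \<in> {y * d | d. d \<in> R}"
    using subring_0[OF assms(1)] by force
next
  fix u v assume "u \<in> {y * d | d. d \<in> R}" "v \<in> {y * d | d. d \<in> R}"
  then obtain c d where "u = y * c" "v = y * d" "c \<in> R" "d \<in> R" by blast
  moreover have "u + v = y * (c + d)"
    using calculation by (simp add: distrib_left)
  ultimately show "u + v \<in> {y * d | d. d \<in> R}"
    using subring_add[OF assms(1)] by blast
next
  fix e u assume "e \<in> R" "u \<in> {y * d | d. d \<in> R}"
  then obtain c where "u = y * c" "c \<in> R" by blast
  then show "e * u \<in> {y * d | d. d \<in> R}"
    using subring_mult[OF assms(1) \<open>e \<in> R\<close>] by (auto simp: mult.left_commute)
qed

lemma ideal_of_add_principal:
  assumes "subring R" "ideal_of R I" "x \<in> R"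
  shows "ideal_of R {p + r * x | p r. p \<in> I \<and> r \<in> R}"
  unfolding ideal_of_def
proof (intro conjI ballI)
  show "{p + r * x | p r. p \<in> I \<and> r \<in> R} \<subseteq> R"
    using assms ideal_of_subset by (blast intro: subring_add subring_mult)
  have "0 = 0 + 0 * x" by simp
  then show "0 \<in> {p + r * x | p r. p \<in> I \<and> r \<in> R}"
    using ideal_of_0[OF assms(2)] subring_0[OF assms(1)] by blast
next
  fix u v
  assume "u \<in> {p + r * x | p r. p \<in> I \<and> r \<in> R}" "v \<in> {p + r * x | p r. p \<in> I \<and> r \<in> R}"
  then obtain p r p' r'
    where "u = p + r * x" "v = p' + r' * x" "p \<in> I" "r \<in> R" "p' \<in> I" "r' \<in> R"
    by blast
  moreover have "u + v = (p + p') + (r + r') * x"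
    using calculation by (simp add: algebra_simps)
  ultimately show "u + v \<in> {p + r * x | p r. p \<in> I \<and> r \<in> R}"
    using ideal_of_add[OF assms(2)] subring_add[OF assms(1)] by blast
next
  fix a u assume "a \<in> R" "u \<in> {p + r * x | p r. p \<in> I \<and> r \<in> R}"
  then obtain p r where "u = p + r * x" "p \<in> I" "r \<in> R" by blast
  moreover have "a * u = a * p + (a * r) * x"
    using calculation by (simp add: algebra_simps)
  ultimately show "a * u \<in> {p + r * x | p r. p \<in> I \<and> r \<in> R}"
    using ideal_of_mult_left[OF assms(2) \<open>a \<in> R\<close>] subring_mult[OF assms(1) \<open>a \<in> R\<close>] by blast
qed

lemma ideal_of_Union_chain:
  assumes "C \<noteq> {}" "\<And>J. J \<in> C \<Longrightarrow> ideal_of R J" "\<And>X Y. X \<in> C \<Longrightarrow> Y \<in> C \<Longrightarrow> X \<subseteq> Y \<or> Y \<subseteq> X"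
  shows "ideal_of R (\<Union>C)"
  unfolding ideal_of_def
proof (intro conjI ballI)
  show "\<Union>C \<subseteq> R" "0 \<in> \<Union>C"
    using assms(1,2) ideal_of_subset ideal_of_0 by blast+
next
  fix x y assume "x \<in> \<Union>C" "y \<in> \<Union>C"
  then obtain X Y where "X \<in> C" "Y \<in> C" "x \<in> X" "y \<in> Y" by blast
  with assms(3) have "\<exists>Z\<in>C. x \<in> Z \<and> y \<in> Z" by blast
  then show "x + y \<in> \<Union>C"
    using assms(2) ideal_of_add by blast
next
  fix a x assume "a \<in> R" "x \<in> \<Union>C"
  then show "a * x \<in> \<Union>C"
    using assms(2) ideal_of_mult_left by blast
qed

lemma prime_ideal_of_ideal: "prime_ideal_of R P \<Longrightarrow> ideal_of R P"
  and prime_ideal_ofD: "prime_ideal_of R P \<Longrightarrow> x \<in> R \<Longrightarrow> y \<in> R \<Longrightarrow> x * y \<in> P \<Longrightarrow> x \<in> P \<or> y \<in> P"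
  by (simp_all add: prime_ideal_of_def)

lemma prime_ideal_of_one_notin:
  assumes "prime_ideal_of R P"
  shows "1 \<notin> P"
proof
  assume "1 \<in> P"
  then have "R \<subseteq> P"
    using ideal_of_mult_right[OF prime_ideal_of_ideal[OF assms]] by fastforce
  then show False
    using assms ideal_of_subset unfolding prime_ideal_of_def by blast
qed

lemma maximal_disjoint_ideal_is_prime:
  assumes R: "subring R" and P: "ideal_of R P" and PM: "P \<inter> M = {}"
    and M: "M \<subseteq> R" "1 \<in> M" "\<And>x y. x \<in> M \<Longrightarrow> y \<in> M \<Longrightarrow> x * y \<in> M"
    and maximal: "\<And>J. ideal_of R J \<Longrightarrow> P \<subseteq> J \<Longrightarrow> J \<inter> M = {} \<Longrightarrow> J = P"
  shows "prime_ideal_of R P"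
proof -
  have meets_M: "\<exists>p\<in>P. \<exists>r\<in>R. p + r * x \<in> M" if x: "x \<in> R" "x \<notin> P" for x
  proof (rule ccontr)
    let ?J = "{p + r * x | p r. p \<in> P \<and> r \<in> R}"
    assume "\<not> ?thesis"
    then have "?J \<inter> M = {}" by blast
    moreover have "P \<subseteq> ?J"
    proof
      fix p assume "p \<in> P"
      moreover have "p = p + 0 * x" by simp
      ultimately show "p \<in> ?J" using subring_0[OF R] by blast
    qed
    ultimately have "?J = P"
      using maximal ideal_of_add_principal[OF R P x(1)] by blast
    moreover have "x = 0 + 1 * x" by simp
    then have "x \<in> ?J"
      using ideal_of_0[OF P] subring_1[OF R] by blast
    ultimately show False using x(2) by blast
  qed
  show ?thesis
    unfolding prime_ideal_of_def
  proof (intro conjI ballI impI P)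
    show "P \<noteq> R" using PM M by blast
  next
    fix x y assume xy: "x \<in> R" "y \<in> R" "x * y \<in> P"
    show "x \<in> P \<or> y \<in> P"
    proof (rule ccontr)
      assume "\<not> (x \<in> P \<or> y \<in> P)"
      then obtain p r p' r' where pr: "p \<in> P" "r \<in> R" "p + r * x \<in> M"
        and pr': "p' \<in> P" "r' \<in> R" "p' + r' * y \<in> M"
        using meets_M xy by meson
      have "(p + r * x) * (p' + r' * y) = (p' + r' * y) * p + (r * p') * x + (r * r') * (x * y)"
        by (simp add: algebra_simps)
      also have "\<dots> \<in> P"
      proof -
        have "p' + r' * y \<in> R" using pr'(3) M(1) by blast
        then have "(p' + r' * y) * p \<in> P" using ideal_of_mult_left[OF P] pr(1) by blast
        moreover have "(r * p') * x \<in> P"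
          using ideal_of_mult_right[OF P xy(1) ideal_of_mult_left[OF P pr(2) pr'(1)]] .
        moreover have "(r * r') * (x * y) \<in> P"
          using ideal_of_mult_left[OF P subring_mult[OF R pr(2) pr'(2)] xy(3)] .
        ultimately show ?thesis using ideal_of_add[OF P] by blast
      qed
      finally show False
        using PM M(3)[OF pr(3) pr'(3)] by blast
    qed
  qed
qed

lemma exists_prime_ideal_disjoint:
  assumes R: "subring R" and I: "ideal_of R I" and IM: "I \<inter> M = {}"
    and M: "M \<subseteq> R" "1 \<in> M" "\<And>x y. x \<in> M \<Longrightarrow> y \<in> M \<Longrightarrow> x * y \<in> M"
  shows "\<exists>P. prime_ideal_of R P \<and> I \<subseteq> P \<and> P \<inter> M = {}"
proof -
  let ?C = "{J. ideal_of R J \<and> I \<subseteq> J \<and> J \<inter> M = {}}"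
  have "\<exists>P\<in>?C. \<forall>X\<in>?C. P \<subseteq> X \<longrightarrow> X = P"
  proof (rule subset_Zorn_nonempty)
    show "?C \<noteq> {}" using I IM by blast
  next
    fix C assume C: "C \<noteq> {}" "subset.chain ?C C"
    then have "C \<subseteq> ?C" "\<And>X Y. X \<in> C \<Longrightarrow> Y \<in> C \<Longrightarrow> X \<subseteq> Y \<or> Y \<subseteq> X"
      by (auto simp: subset_chain_def)
    then have "ideal_of R (\<Union>C)"
      using C(1) by (intro ideal_of_Union_chain) auto
    moreover have "I \<subseteq> \<Union>C" "\<Union>C \<inter> M = {}"
      using C(1) \<open>C \<subseteq> ?C\<close> by auto
    ultimately show "\<Union>C \<in> ?C" by blast
  qed
  then obtain P where P: "ideal_of R P" "I \<subseteq> P" "P \<inter> M = {}"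
    and maximal: "\<And>J. ideal_of R J \<Longrightarrow> P \<subseteq> J \<Longrightarrow> J \<inter> M = {} \<Longrightarrow> J = P"
    by (smt (verit) mem_Collect_eq subset_trans)
  then show ?thesis
    using maximal_disjoint_ideal_is_prime[OF R P(1,3) M maximal] by blast
qed

lemma loc_primeI: "a \<in> A \<Longrightarrow> r \<in> A \<Longrightarrow> r \<notin> Q \<Longrightarrow> a / r \<in> loc_prime A Q"
  unfolding loc_prime_def loc_at_def by blast

lemma loc_prime_mult:
  assumes "subring A" "a \<in> A" "x \<in> loc_prime A Q"
  shows "a * x \<in> loc_prime A Q"
proof -
  obtain c r where "c \<in> A" "r \<in> A" "r \<notin> Q" "x = c / r"
    using assms(3) unfolding loc_prime_def loc_at_def by blast
  then show ?thesis
    using loc_primeI[of "a * c" A r Q] subring_mult[OF assms(1,2)] by simp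
qed

lemma prime_ideal_of_contraction:
  assumes A: "subring A" and AB: "A \<subseteq> B" and P: "prime_ideal_of B P"
  shows "prime_ideal_of A (P \<inter> A)"
  unfolding prime_ideal_of_def ideal_of_def
proof (intro conjI ballI impI)
  have IP: "ideal_of B P" using P by (rule prime_ideal_of_ideal)
  show "P \<inter> A \<subseteq> A" by blast
  show "0 \<in> P \<inter> A" using ideal_of_0[OF IP] subring_0[OF A] by blast
  show "P \<inter> A \<noteq> A" using prime_ideal_of_one_notin[OF P] subring_1[OF A] by blast
  fix u v assume "u \<in> P \<inter> A" "v \<in> P \<inter> A"
  then show "u + v \<in> P \<inter> A" using ideal_of_add[OF IP] subring_add[OF A] by blast
next
  fix a u assume "a \<in> A" "u \<in> P \<inter> A"
  then show "a * u \<in> P \<inter> A"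
    using ideal_of_mult_left[OF prime_ideal_of_ideal[OF P]] subring_mult[OF A] AB by blast
next
  fix u v assume "u \<in> A" "v \<in> A" "u * v \<in> P \<inter> A"
  then show "u \<in> P \<inter> A \<or> v \<in> P \<inter> A" using prime_ideal_ofD[OF P] AB by blast
qed

lemma height_one_prime_prime: "height_one_prime A Q \<Longrightarrow> prime_ideal_of A Q"
  by (simp add: height_one_prime_def)

lemma height_one_prime_not_subset:
  assumes "height_one_prime A Q" "height_one_prime A Q'" "Q' \<noteq> Q"
  shows "\<not> Q' \<subseteq> Q"
  using assms unfolding height_one_prime_def by blast

lemma height_one_prime_power_mult_in_loc_prime:
  fixes A :: "'k::field set"
  assumes A: "subring A" and K: "is_fraction_field_of A" and Q: "height_one_prime A Q"
    and s: "s \<in> Q"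
  shows "\<exists>n. s ^ n * x \<in> loc_prime A Q"
proof -
  have PQ: "prime_ideal_of A Q" using height_one_prime_prime[OF Q] .
  have QA: "Q \<subseteq> A" using ideal_of_subset[OF prime_ideal_of_ideal[OF PQ]] .
  obtain a b where ab: "a \<in> A" "b \<in> A" "b \<noteq> 0" "x = a / b"
    using K unfolding is_fraction_field_of_def by blast
  let ?M = "{r * s ^ n | r n. r \<in> A \<and> r \<notin> Q}"
  let ?I = "{b * c | c. c \<in> A}"
  show ?thesis
  proof (cases "?I \<inter> ?M = {}")
    case False
    then obtain c r n where crn: "c \<in> A" "r \<in> A" "r \<notin> Q" "b * c = r * s ^ n" by blast
    have "r \<noteq> 0" using crn(3) ideal_of_0[OF prime_ideal_of_ideal[OF PQ]] by auto
    then have "s ^ n * x = (c * a) / r"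
      using crn(4) ab(3,4) by (simp add: field_simps) (metis mult.commute mult.left_commute)
    then show ?thesis
      using loc_primeI[OF subring_mult[OF A crn(1) ab(1)] crn(2,3)] by metis
  next
    case True
    have "?M \<subseteq> A" using s QA A by (auto intro: subring_mult subring_power)
    moreover have "(1::'k) = 1 * s ^ 0" by simp
    then have "1 \<in> ?M"
      using subring_1[OF A] prime_ideal_of_one_notin[OF PQ] by blast
    moreover have "u * v \<in> ?M" if uv: "u \<in> ?M" "v \<in> ?M" for u v
    proof -
      obtain r1 n1 r2 n2 where "u = r1 * s ^ n1" "v = r2 * s ^ n2"
        and r: "r1 \<in> A" "r1 \<notin> Q" "r2 \<in> A" "r2 \<notin> Q"
        using uv by blast
      then have "u * v = (r1 * r2) * s ^ (n1 + n2)" by (simp add: power_add algebra_simps)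
      moreover have "r1 * r2 \<in> A" "r1 * r2 \<notin> Q"
        using r subring_mult[OF A] prime_ideal_ofD[OF PQ] by blast+
      ultimately show ?thesis by blast
    qed
    ultimately obtain P where P: "prime_ideal_of A P" "?I \<subseteq> P" "P \<inter> ?M = {}"
      using exists_prime_ideal_disjoint[OF A ideal_of_principal[OF A ab(2)] True] by blast
    have "P \<subseteq> Q"
    proof
      fix p assume p: "p \<in> P"
      have "p = p * s ^ 0" by simp
      then show "p \<in> Q"
        using p P(3) ideal_of_subset[OF prime_ideal_of_ideal[OF P(1)]] by blast
    qed
    moreover have "b \<in> P"
      using P(2) subring_1[OF A] by force
    ultimately have "P = Q"
      using Q P(1) ab(3) unfolding height_one_prime_def by blast
    moreover have "s = 1 * s ^ 1" by simp
    then have "s \<in> ?M"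
      using subring_1[OF A] prime_ideal_of_one_notin[OF PQ] by blast
    ultimately show ?thesis using P(3) s by blast
  qed
qed

lemma exists_in_ideals_not_in_prime:
  assumes A: "subring A" and Q: "prime_ideal_of A Q" and "finite G"
    and G: "\<And>I. I \<in> G \<Longrightarrow> ideal_of A I \<and> \<not> I \<subseteq> Q"
  shows "\<exists>z\<in>A. z \<notin> Q \<and> (\<forall>I\<in>G. z \<in> I)"
  using \<open>finite G\<close> G
proof (induction G rule: finite_induct)
  case empty
  then show ?case using subring_1[OF A] prime_ideal_of_one_notin[OF Q] by blast
next
  case (insert I G)
  have "\<exists>z\<in>A. z \<notin> Q \<and> (\<forall>I\<in>G. z \<in> I)"
    by (rule insert.IH) (use insert.prems in blast)
  then obtain z where z: "z \<in> A" "z \<notin> Q" "\<forall>I\<in>G. z \<in> I" by blast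
  have I: "ideal_of A I" and "\<not> I \<subseteq> Q" using insert.prems by blast+
  then obtain w where w: "w \<in> I" "w \<notin> Q" by blast
  have wA: "w \<in> A" using w(1) ideal_of_subset[OF I] by blast
  have "z * w \<in> A" "z * w \<in> I"
    using subring_mult[OF A z(1) wA] ideal_of_mult_left[OF I z(1) w(1)] .
  moreover have "z * w \<notin> Q"
    using prime_ideal_ofD[OF Q z(1) wA] z(2) w(2) by blast
  moreover have "z * w \<in> I'" if "I' \<in> G" for I'
    using ideal_of_mult_right[OF _ wA, of I' z] z(3) insert.prems that by blast
  ultimately show ?case by blast
qed

lemma prime_avoidance:
  assumes A: "subring A" and J: "ideal_of A J" and "finite G"
    and G: "\<And>Q. Q \<in> G \<Longrightarrow> prime_ideal_of A Q \<and> \<not> J \<subseteq> Q"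
    and incomparable: "\<And>Q Q'. Q \<in> G \<Longrightarrow> Q' \<in> G \<Longrightarrow> Q' \<noteq> Q \<Longrightarrow> \<not> Q' \<subseteq> Q"
  shows "\<exists>t\<in>J. \<forall>Q\<in>G. t \<notin> Q"
  using \<open>finite G\<close> G incomparable
proof (induction G rule: finite_induct)
  case empty
  then show ?case using ideal_of_0[OF J] by blast
next
  case (insert Q G)
  have "\<exists>t\<in>J. \<forall>Q'\<in>G. t \<notin> Q'"
    by (rule insert.IH) (use insert.prems in blast)+
  then obtain t where t: "t \<in> J" "\<forall>Q'\<in>G. t \<notin> Q'" by blast
  show ?case
  proof (cases "t \<in> Q")
    case False
    then show ?thesis using t by blast
  next
    case True
    have Q: "prime_ideal_of A Q" and "\<not> J \<subseteq> Q" using insert.prems(1) by blast+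
    then obtain u where u: "u \<in> J" "u \<notin> Q" by blast
    have "\<exists>z\<in>A. z \<notin> Q \<and> (\<forall>Q'\<in>G. z \<in> Q')"
    proof (rule exists_in_ideals_not_in_prime[OF A Q insert.hyps(1)])
      fix Q' assume Q': "Q' \<in> G"
      then have "Q' \<noteq> Q" using insert.hyps(2) by blast
      moreover have "prime_ideal_of A Q'" using insert.prems(1) Q' by blast
      ultimately show "ideal_of A Q' \<and> \<not> Q' \<subseteq> Q"
        using insert.prems(2) Q' prime_ideal_of_ideal by blast
    qed
    then obtain z where z: "z \<in> A" "z \<notin> Q" "\<forall>Q'\<in>G. z \<in> Q'" by blast
    have zu: "z * u \<in> J" using ideal_of_mult_left[OF J z(1) u(1)] .
    have "t + z * u \<in> J" using ideal_of_add[OF J t(1) zu] .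
    moreover have "t + z * u \<notin> Q"
    proof
      assume "t + z * u \<in> Q"
      then have "(t + z * u) - t \<in> Q"
        using ideal_of_diff[OF A prime_ideal_of_ideal[OF Q]] True by blast
      moreover have "u \<in> A" using u(1) ideal_of_subset[OF J] by blast
      ultimately show False
        using prime_ideal_ofD[OF Q z(1)] z(2) u(2) by simp
    qed
    moreover have "t + z * u \<notin> Q'" if Q': "Q' \<in> G" for Q'
    proof
      have IQ': "ideal_of A Q'" using Q' insert.prems(1) prime_ideal_of_ideal by blast
      assume "t + z * u \<in> Q'"
      moreover have "z * u \<in> Q'"
        using ideal_of_mult_right[OF IQ'] z(3) Q' u(1) ideal_of_subset[OF J] by blast
      ultimately have "(t + z * u) - z * u \<in> Q'" using ideal_of_diff[OF A IQ'] by blast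
      then show False using t(2) Q' by simp
    qed
    ultimately show ?thesis by blast
  qed
qed

text \<open>Apply the equational criterion of flatness to the relation \<open>x \<cdot> 1 + (- z) \<cdot> c = 0\<close>,
  where \<open>c = x / z\<close>. In the resulting factorisation \<open>1 = \<Sum>\<^sub>j e 0 j \<cdot> d j\<close> every \<open>e 0 j\<close>
  lies in \<open>Q\<close>, since otherwise \<open>c = e 1 j / e 0 j \<in> A\<^sub>Q\<close>.\<close>
lemma flat_over_one_in_extended_ideal:
  fixes A B :: "'k::field set"
  assumes A: "subring A" and B: "subring B" and K: "is_fraction_field_of A"
    and flat: "flat_over A B" and Q: "ideal_of A Q" and c: "c \<in> B" "c \<notin> loc_prime A Q"
  shows "\<exists>(m::nat) e d. (\<forall>j<m. e j \<in> Q \<and> d j \<in> B) \<and> (\<Sum>j<m. e j * d j) = 1"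
proof -
  obtain x z where xz: "x \<in> A" "z \<in> A" "z \<noteq> 0" "c = x / z"
    using K unfolding is_fraction_field_of_def by blast
  let ?a = "\<lambda>i::nat. if i = 0 then x else - z"
  let ?b = "\<lambda>i::nat. if i = 0 then 1 else c"
  have relation_in_B: "(\<forall>i<2. ?a i \<in> A \<and> ?b i \<in> B) \<and> (\<Sum>i<2. ?a i * ?b i) = 0"
    using xz c subring_uminus[OF A] subring_1[OF B] by (simp add: numeral_2_eq_2 lessThan_Suc)
  obtain m :: nat and e d where e: "\<forall>i<2. \<forall>j<m. e i j \<in> A" and d: "\<forall>j<m. d j \<in> B"
    and factor: "\<forall>i<2. ?b i = (\<Sum>j<m. e i j * d j)"
    and relation: "\<forall>j<m. (\<Sum>i<2. ?a i * e i j) = 0"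
    using flat[unfolded flat_over_def, rule_format, OF relation_in_B] by blast
  have "e 0 j \<in> Q" if j: "j < m" for j
  proof (rule ccontr)
    assume notin: "e 0 j \<notin> Q"
    have "x * e 0 j = z * e 1 j"
      using relation j by (simp add: numeral_2_eq_2 lessThan_Suc)
    moreover have "e 0 j \<noteq> 0"
      using notin ideal_of_0[OF Q] by auto
    ultimately have "c = e 1 j / e 0 j"
      using xz(3,4) by (auto simp: field_simps)
    moreover have "e 0 j \<in> A" "e 1 j \<in> A"
      using e j by auto
    ultimately have "c \<in> loc_prime A Q"
      using loc_primeI notin by simp
    then show False using c(2) by blast
  qed
  moreover have "(\<Sum>j<m. e 0 j * d j) = 1"
    using factor by (metis less_2_cases_iff)
  ultimately show ?thesis using d by blast
qed

lemma ideal_of_numerators: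
  assumes A: "subring A" and AB: "overring A B"
  shows "ideal_of A {t \<in> A. t / y \<in> B}"
proof -
  have B: "subring B" and "A \<subseteq> B" using AB unfolding overring_def by auto
  show ?thesis
    unfolding ideal_of_def
  proof (intro conjI ballI)
    show "{t \<in> A. t / y \<in> B} \<subseteq> A" by blast
    show "0 \<in> {t \<in> A. t / y \<in> B}" using subring_0[OF A] subring_0[OF B] by simp
    fix u v assume "u \<in> {t \<in> A. t / y \<in> B}" "v \<in> {t \<in> A. t / y \<in> B}"
    then show "u + v \<in> {t \<in> A. t / y \<in> B}"
      using subring_add[OF A] subring_add[OF B] by (simp add: add_divide_distrib)
  next
    fix a u assume "a \<in> A" "u \<in> {t \<in> A. t / y \<in> B}"
    then show "a * u \<in> {t \<in> A. t / y \<in> B}"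
      using subring_mult[OF A] subring_mult[OF B, of a "u / y"] \<open>A \<subseteq> B\<close> by auto
  qed
qed

lemma flat_over_numerators_not_subset:
  fixes A B :: "'k::field set"
  assumes A: "subring A" and K: "is_fraction_field_of A" and AB: "overring A B"
    and flat: "flat_over A B" and Q: "height_one_prime A Q" and "\<not> B \<subseteq> loc_prime A Q"
    and y: "y \<in> A" "y \<noteq> 0"
  shows "\<not> {t \<in> A. t / y \<in> B} \<subseteq> Q"
proof
  assume numerators: "{t \<in> A. t / y \<in> B} \<subseteq> Q"
  have B: "subring B" and "A \<subseteq> B" using AB unfolding overring_def by auto
  have PQ: "prime_ideal_of A Q" using height_one_prime_prime[OF Q] .
  have disjoint: "{y * d | d. d \<in> B} \<inter> (A - Q) = {}"
  proof -
    have "y * d \<in> Q" if "d \<in> B" "y * d \<in> A" for d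
      using numerators that y(2) by auto
    then show ?thesis by blast
  qed
  have complement: "A - Q \<subseteq> B" "1 \<in> A - Q"
    using \<open>A \<subseteq> B\<close> subring_1[OF A] prime_ideal_of_one_notin[OF PQ] by blast+
  have "u * v \<in> A - Q" if "u \<in> A - Q" "v \<in> A - Q" for u v
    using that subring_mult[OF A] prime_ideal_ofD[OF PQ] by blast
  moreover have "ideal_of B {y * d | d. d \<in> B}"
    using ideal_of_principal[OF B] y(1) \<open>A \<subseteq> B\<close> by blast
  ultimately obtain P where P: "prime_ideal_of B P" "{y * d | d. d \<in> B} \<subseteq> P" "P \<inter> (A - Q) = {}"
    using exists_prime_ideal_disjoint[OF B _ disjoint complement] by blast
  have "y \<in> P \<inter> A"
    using P(2) subring_1[OF B] y(1) by force
  then have "P \<inter> A = Q"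
    using Q prime_ideal_of_contraction[OF A \<open>A \<subseteq> B\<close> P(1)] P(3) y(2)
    unfolding height_one_prime_def by blast
  moreover obtain c where "c \<in> B" "c \<notin> loc_prime A Q"
    using \<open>\<not> B \<subseteq> loc_prime A Q\<close> by blast
  then obtain m :: nat and e d where "\<forall>j<m. e j \<in> Q \<and> d j \<in> B" "(\<Sum>j<m. e j * d j) = 1"
    using flat_over_one_in_extended_ideal[OF A B K flat prime_ideal_of_ideal[OF PQ]] by blast
  ultimately have "(\<Sum>j<m. e j * d j) \<in> P"
    using prime_ideal_of_ideal[OF P(1)]
    by (intro ideal_of_sum ideal_of_mult_right) auto
  then show False using prime_ideal_of_one_notin[OF P(1)] \<open>(\<Sum>j<m. e j * d j) = 1\<close> by simp
qed

definition units_in :: "'k::field set \<Rightarrow> 'k set \<Rightarrow> 'k set" where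
  "units_in A B = {s \<in> A. unit_of B s}"

lemma mult_closed_nonzero_units_in:
  assumes A: "subring A" and AB: "overring A B"
  shows "mult_closed_nonzero A (units_in A B)"
proof -
  have B: "subring B" and "A \<subseteq> B" using AB unfolding overring_def by auto
  then show ?thesis
    unfolding mult_closed_nonzero_def units_in_def unit_of_def
    using subring_1 subring_mult[OF A] subring_mult[OF B] A
    by (auto simp: inverse_mult_distrib)
qed

lemma loc_at_units_in_subset:
  assumes "overring A B"
  shows "loc_at A (units_in A B) \<subseteq> B"
  using assms unfolding loc_at_def units_in_def unit_of_def overring_def
  by (auto simp: divide_inverse intro: subring_mult)

lemma mult_closed_nonzero_power:
  "mult_closed_nonzero A S \<Longrightarrow> s \<in> S \<Longrightarrow> s ^ n \<in> S"
  by (induction n) (auto simp: mult_closed_nonzero_def)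

lemma units_in_meets_height_one_prime:
  fixes A B :: "'k::field set"
  assumes A: "subring A" and K: "is_fraction_field_of A" and AB: "overring A B"
    and flat: "flat_over A B" and centered: "well_centered A B" and "finite G"
    and G: "\<And>Q. Q \<in> G \<Longrightarrow> height_one_prime A Q \<and> \<not> B \<subseteq> loc_prime A Q"
    and Inter: "B \<inter> (\<Inter>Q\<in>G. loc_prime A Q) \<subseteq> A"
    and Q0: "Q0 \<in> G"
  shows "units_in A B \<inter> Q0 \<noteq> {}"
proof -
  have P0: "prime_ideal_of A Q0" and "Q0 \<noteq> {0}"
    using G[OF Q0] unfolding height_one_prime_def by blast+
  have I0: "ideal_of A Q0" using P0 by (rule prime_ideal_of_ideal)
  obtain y where y: "y \<in> Q0" "y \<noteq> 0"
    using \<open>Q0 \<noteq> {0}\<close> ideal_of_0[OF I0] by blast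
  have yA: "y \<in> A" using y(1) ideal_of_subset[OF I0] by blast
  have "\<exists>t\<in>{t \<in> A. t / y \<in> B}. \<forall>Q\<in>G. t \<notin> Q"
  proof (rule prime_avoidance[OF A ideal_of_numerators[OF A AB] \<open>finite G\<close>])
    fix Q assume "Q \<in> G"
    then have Q: "height_one_prime A Q" "\<not> B \<subseteq> loc_prime A Q" using G by blast+
    show "prime_ideal_of A Q \<and> \<not> {t \<in> A. t / y \<in> B} \<subseteq> Q"
      using height_one_prime_prime[OF Q(1)]
        flat_over_numerators_not_subset[OF A K AB flat Q yA y(2)] by blast
  next
    fix Q Q' assume "Q \<in> G" "Q' \<in> G" "Q' \<noteq> Q"
    then show "\<not> Q' \<subseteq> Q" using G height_one_prime_not_subset by meson
  qed
  then obtain t where t: "t \<in> A" "t / y \<in> B" "\<forall>Q\<in>G. t \<notin> Q" by blast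
  then obtain u where u: "unit_of B u" "u * (t / y) \<in> A"
    using centered unfolding well_centered_def by blast
  define a where "a = u * (t / y)"
  have "t \<noteq> 0" using t(3) Q0 ideal_of_0[OF I0] by auto
  then have u_eq: "u = (a * y) / t" and ut: "u * t = a * y"
    unfolding a_def using y(2) by (simp_all add: field_simps)
  have aA: "a \<in> A" using u(2) unfolding a_def .
  have ayA: "a * y \<in> A" using subring_mult[OF A aA yA] .
  have "u \<in> B \<inter> (\<Inter>Q\<in>G. loc_prime A Q)"
    using u(1) loc_primeI[OF ayA t(1)] t(3) unfolding u_eq unit_of_def by auto
  then have uA: "u \<in> A" using Inter by blast
  have "u * t \<in> Q0"
    unfolding ut using ideal_of_mult_left[OF I0 aA y(1)] .
  then have "u \<in> Q0"
    using prime_ideal_ofD[OF P0 uA t(1)] t(3) Q0 by blast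
  then show ?thesis
    using uA u(1) unfolding units_in_def by blast
qed

lemma exists_common_multiplier_into_loc_primes:
  fixes A :: "'k::field set"
  assumes A: "subring A" and K: "is_fraction_field_of A" and S: "mult_closed_nonzero A S"
    and "finite G" and G: "\<And>Q. Q \<in> G \<Longrightarrow> height_one_prime A Q \<and> S \<inter> Q \<noteq> {}"
  shows "\<exists>s\<in>S. \<forall>Q\<in>G. s * x \<in> loc_prime A Q"
  using \<open>finite G\<close> G
proof (induction G rule: finite_induct)
  case empty
  then show ?case using S unfolding mult_closed_nonzero_def by blast
next
  case (insert Q G)
  have "\<exists>s\<in>S. \<forall>Q'\<in>G. s * x \<in> loc_prime A Q'"
    by (rule insert.IH) (use insert.prems in blast)
  then obtain s where s: "s \<in> S" "\<forall>Q'\<in>G. s * x \<in> loc_prime A Q'" by blast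
  have Q: "height_one_prime A Q" and "S \<inter> Q \<noteq> {}" using insert.prems by blast+
  then obtain q where q: "q \<in> S" "q \<in> Q" by blast
  obtain n where n: "q ^ n * x \<in> loc_prime A Q"
    using height_one_prime_power_mult_in_loc_prime[OF A K Q q(2)] by blast
  have qn: "q ^ n \<in> S" using mult_closed_nonzero_power[OF S q(1)] .
  have SA: "S \<subseteq> A" using S unfolding mult_closed_nonzero_def by blast
  have "s * q ^ n \<in> S" using S s(1) qn unfolding mult_closed_nonzero_def by blast
  moreover have "s * q ^ n * x \<in> loc_prime A Q"
    using loc_prime_mult[OF A _ n, of s] s(1) SA by (auto simp: ac_simps)
  moreover have "s * q ^ n * x \<in> loc_prime A Q'" if "Q' \<in> G" for Q'
    using loc_prime_mult[OF A _ , of "q ^ n" "s * x" Q'] s(2) that qn SA by (auto simp: ac_simps)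
  ultimately show ?case by blast
qed

theorem theorem4p18:
  fixes A B :: "'k::field set" and \<F> :: "'k set set"
  assumes "subring A"
    and "is_fraction_field_of A"
    and "overring A B"
    and "flat_over A B"
    and "well_centered A B"
    and "finite \<F>"
    and "\<forall>P\<in>\<F>. height_one_prime A P"
    and "A = B \<inter> (\<Inter>P\<in>\<F>. loc_prime A P)"
  shows "is_localization A B"
proof -
  note A = assms(1) and K = assms(2) and AB = assms(3)
  define G where "G = {Q \<in> \<F>. \<not> B \<subseteq> loc_prime A Q}"
  have "finite G" using assms(6) unfolding G_def by simp
  have G: "\<And>Q. Q \<in> G \<Longrightarrow> height_one_prime A Q \<and> \<not> B \<subseteq> loc_prime A Q"
    using assms(7) unfolding G_def by blast
  have Inter: "B \<inter> (\<Inter>Q\<in>G. loc_prime A Q) \<subseteq> A"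
    using assms(8) unfolding G_def by blast
  have S: "mult_closed_nonzero A (units_in A B)"
    using mult_closed_nonzero_units_in[OF A AB] .
  have "B \<subseteq> loc_at A (units_in A B)"
  proof
    fix b assume b: "b \<in> B"
    obtain s where s: "s \<in> units_in A B" "\<forall>Q\<in>G. s * b \<in> loc_prime A Q"
      using exists_common_multiplier_into_loc_primes[OF A K S \<open>finite G\<close>]
        units_in_meets_height_one_prime[OF A K AB assms(4,5) \<open>finite G\<close> G Inter] G by blast
    then have "s * b \<in> B" "s \<noteq> 0"
      using b AB unfolding units_in_def unit_of_def overring_def by (auto intro: subring_mult)
    then have "s * b \<in> A" and "b = (s * b) / s"
      using Inter s(2) by auto
    then show "b \<in> loc_at A (units_in A B)"
      using s(1) unfolding loc_at_def by blast
  qed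
  then show ?thesis
    using S loc_at_units_in_subset[OF AB] unfolding is_localization_def by blast
qed

end
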